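(* For the $2$-server problem on the line, for any instance $I$, any prediction, and any $\lambda\in(0,1]$, there is $c\ge0$ depending only on the initial configuration such that $\mathrm{LambdaDC}(I)\le(1+1/\lambda)\cdot\mathrm{OPT}(I)+c$.
   Context: The $2$-server problem on the line: servers on $\mathbb{R}$ labeled $s_1\le s_2$, requests revealed online and served by moving a server to them; cost = total distance moved; $\mathrm{OPT}(I)$ is the optimal offline cost. A prediction gives for each request $r_t$ an index $p_t\in\{1,2\}$. LambdaDC: if $r_t<s_1$ or $r_t>s_2$, move only the closest server; if $s_1<r_t<s_2$ and $p_t=1$, move $s_1$ at speed $1$ and $s_2$ at speed $\lambda$ towards $r_t$ until one reaches it; if $p_t=2$, the speeds are swapped. *)

theory Defs
  imports Complex_Main
begin

text \<open>2-server problem on the real line.  A configuration is a pair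
 (s1, s2) of server positions.  A prediction for a request is an index 1 or 2.\<close>

text \<open>One step of LambdaDC with speed parameter lam, current configuration (a,b)
 (a \<le> b), request r and predicted index p.  Returns the new configuration and
 the cost (total distance moved) of the step.\<close>
definition lambda_dc_step :: "real \<Rightarrow> real \<times> real \<Rightarrow> real \<Rightarrow> nat \<Rightarrow> (real \<times> real) \<times> real" where
  "lambda_dc_step lam c r p =
    (let a = fst c; b = snd c in
     if r \<le> a then ((r, b), a - r)
     else if b \<le> r then ((a, r), r - b)
     else if p = 1 then
       (let t = min (r - a) ((b - r) / lam) in ((a + t, b - lam * t), t + lam * t))
     else
       (let t = min ((r - a) / lam) (b - r) in ((a + lam * t, b - t), lam * t + t)))"

fun lambda_dc_cost :: "real \<Rightarrow> real \<times> real \<Rightarrow> real list \<Rightarrow> nat list \<Rightarrow> real" where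
  "lambda_dc_cost lam c (r # rs) (p # ps) =
     (let (c', k) = lambda_dc_step lam c r p in k + lambda_dc_cost lam c' rs ps)"
| "lambda_dc_cost lam c _ _ = 0"

text \<open>Movement cost of a sequence of configurations (servers are labelled:
 first/second component is the position of server 1/2), starting from c.\<close>
fun move_cost :: "real \<times> real \<Rightarrow> (real \<times> real) list \<Rightarrow> real" where
  "move_cost c [] = 0"
| "move_cost c (y # ys) = \<bar>fst y - fst c\<bar> + \<bar>snd y - snd c\<bar> + move_cost y ys"

definition feasible_schedule :: "real list \<Rightarrow> (real \<times> real) list \<Rightarrow> bool" where
  "feasible_schedule rs xs \<longleftrightarrow> length xs = length rs \<and>
     (\<forall>t < length rs. rs ! t = fst (xs ! t) \<or> rs ! t = snd (xs ! t))"

definition opt_cost :: "real \<times> real \<Rightarrow> real list \<Rightarrow> real" where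
  "opt_cost c rs = Inf {move_cost c xs | xs. feasible_schedule rs xs}"

end

theory Submission
  imports Defs
begin

text \<open>Let a \<le> b be the servers of LambdaDC, M the cost of a
  minimum matching between them and the servers of an offline schedule, and
  \<Phi> = (1 + \<lambda>) M + (b - a).  A move of the offline servers by d raises \<Phi> by at
  most (1 + \<lambda>) d, while a LambdaDC step of cost k, served once the offline schedule has
  a server on the request, lowers \<Phi> by at least \<lambda> k.  Summing, \<lambda> ALG \<le> (1 + \<lambda>) OPT + \<Phi>(0),
  and \<Phi>(0) = s2 - s1 since both start from the same configuration.\<close>

lemma move_cost_nonneg: "0 \<le> move_cost c xs"
  by (induction xs arbitrary: c) auto

lemma feasible_schedule_iff_list_all2:
  "feasible_schedule rs xs \<longleftrightarrow> list_all2 (\<lambda>r d. r = fst d \<or> r = snd d) rs xs"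
  unfolding feasible_schedule_def by (auto simp: list_all2_conv_all_nth)

lemma opt_cost_greatest:
  assumes "\<And>xs. feasible_schedule rs xs \<Longrightarrow> v \<le> move_cost c xs"
  shows "v \<le> opt_cost c rs"
  unfolding opt_cost_def
proof (rule cInf_greatest)
  have "feasible_schedule rs (map (\<lambda>r. (r, snd c)) rs)"
    unfolding feasible_schedule_def by simp
  then show "{move_cost c xs |xs. feasible_schedule rs xs} \<noteq> {}" by blast
qed (use assms in blast)

definition matching_dist :: "real \<times> real \<Rightarrow> real \<times> real \<Rightarrow> real" where
  "matching_dist c d =
     min (\<bar>fst c - fst d\<bar> + \<bar>snd c - snd d\<bar>) (\<bar>fst c - snd d\<bar> + \<bar>snd c - fst d\<bar>)"

lemma matching_dist_nonneg: "0 \<le> matching_dist c d"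
  unfolding matching_dist_def by simp

lemma matching_dist_refl: "matching_dist c c = 0"
  unfolding matching_dist_def by simp

lemma matching_dist_swap: "matching_dist c (snd d, fst d) = matching_dist c d"
  unfolding matching_dist_def by (simp add: min.commute)

lemma matching_dist_triangle:
  "matching_dist c d' \<le> matching_dist c d + \<bar>fst d' - fst d\<bar> + \<bar>snd d' - snd d\<bar>"
  unfolding matching_dist_def min_def by (auto split: abs_split)

lemma matching_dist_move_left_onto:
  assumes "x \<le> a" "a \<le> b"
  shows "matching_dist (x, b) (x, y) \<le> matching_dist (a, b) (x, y) - (a - x)"
  using assms unfolding matching_dist_def min_def by (auto split: abs_split)

lemma matching_dist_move_right_onto:
  assumes "a \<le> b" "b \<le> x"
  shows "matching_dist (a, x) (x, y) \<le> matching_dist (a, b) (x, y) - (x - b)"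
  using assms unfolding matching_dist_def min_def by (auto split: abs_split)

lemma matching_dist_move_inwards:
  assumes "a \<le> a'" "a' \<le> x" "x \<le> b'" "b' \<le> b"
  shows "matching_dist (a', b') (x, y) \<le> matching_dist (a, b) (x, y) + \<bar>(a' - a) - (b - b')\<bar>"
  using assms unfolding matching_dist_def min_def by (auto split: abs_split)

definition dc_potential :: "real \<Rightarrow> real \<times> real \<Rightarrow> real \<times> real \<Rightarrow> real" where
  "dc_potential lam c d = (1 + lam) * matching_dist c d + (snd c - fst c)"

lemma dc_potential_self: "dc_potential lam c c = snd c - fst c"
  unfolding dc_potential_def by (simp add: matching_dist_refl)

lemma dc_potential_nonneg: "0 \<le> lam \<Longrightarrow> fst c \<le> snd c \<Longrightarrow> 0 \<le> dc_potential lam c d"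
  unfolding dc_potential_def by (simp add: matching_dist_nonneg)

lemma dc_potential_swap: "dc_potential lam c (snd d, fst d) = dc_potential lam c d"
  unfolding dc_potential_def by (simp add: matching_dist_swap)

lemma dc_potential_triangle:
  assumes "0 \<le> lam"
  shows "dc_potential lam c e
    \<le> dc_potential lam c d + (1 + lam) * (\<bar>fst e - fst d\<bar> + \<bar>snd e - snd d\<bar>)"
proof -
  have "(1 + lam) * matching_dist c e
      \<le> (1 + lam) * (matching_dist c d + \<bar>fst e - fst d\<bar> + \<bar>snd e - snd d\<bar>)"
    using assms matching_dist_triangle by (simp add: mult_left_mono)
  then show ?thesis unfolding dc_potential_def by (simp add: algebra_simps)
qed

lemma dc_potential_move_left_onto:
  assumes "0 \<le> lam" "x \<le> a" "a \<le> b"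
  shows "lam * (a - x) + dc_potential lam (x, b) (x, y) \<le> dc_potential lam (a, b) (x, y)"
proof -
  have "(1 + lam) * matching_dist (x, b) (x, y) \<le> (1 + lam) * (matching_dist (a, b) (x, y) - (a - x))"
    using assms matching_dist_move_left_onto by (simp add: mult_left_mono)
  then show ?thesis unfolding dc_potential_def by (simp add: algebra_simps)
qed

lemma dc_potential_move_right_onto:
  assumes "0 \<le> lam" "a \<le> b" "b \<le> x"
  shows "lam * (x - b) + dc_potential lam (a, x) (x, y) \<le> dc_potential lam (a, b) (x, y)"
proof -
  have "(1 + lam) * matching_dist (a, x) (x, y) \<le> (1 + lam) * (matching_dist (a, b) (x, y) - (x - b))"
    using assms matching_dist_move_right_onto by (simp add: mult_left_mono)
  then show ?thesis unfolding dc_potential_def by (simp add: algebra_simps)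
qed

lemma dc_potential_move_inwards:
  assumes lam: "0 \<le> lam" "lam \<le> 1" and speeds: "u = lam * t \<or> t = lam * u"
    and "0 \<le> t" "0 \<le> u" "a + t \<le> x" "x \<le> b - u"
  shows "lam * (t + u) + dc_potential lam (a + t, b - u) (x, y) \<le> dc_potential lam (a, b) (x, y)"
proof -
  \<comment> \<open>this is where the speed ratio matters: (1 + lam) |t - u| + lam (t + u) = t + u\<close>
  have speed_gap: "(1 + lam) * \<bar>t - u\<bar> = (1 - lam) * (t + u)"
    using speeds
  proof
    assume u: "u = lam * t"
    then have "u \<le> t" using lam \<open>0 \<le> t\<close> by (simp add: mult_left_le_one_le)
    then show ?thesis using u by (simp add: algebra_simps)
  next
    assume t: "t = lam * u"
    then have "t \<le> u" using lam \<open>0 \<le> u\<close> by (simp add: mult_left_le_one_le)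
    then show ?thesis using t by (simp add: algebra_simps)
  qed
  have "matching_dist (a + t, b - u) (x, y) \<le> matching_dist (a, b) (x, y) + \<bar>t - u\<bar>"
    using matching_dist_move_inwards[of a "a + t" x "b - u" b y] assms by simp
  then have "(1 + lam) * matching_dist (a + t, b - u) (x, y)
      \<le> (1 + lam) * matching_dist (a, b) (x, y) + (1 - lam) * (t + u)"
    using lam speed_gap by (metis add_nonneg_nonneg distrib_left mult_left_mono zero_le_one)
  then show ?thesis unfolding dc_potential_def by (simp add: algebra_simps)
qed

lemma min_div_bounds:
  fixes lam e f :: real
  assumes "0 < lam" "0 \<le> e" "0 \<le> f"
  shows "0 \<le> min e (f / lam)" "min e (f / lam) \<le> e" "lam * min e (f / lam) \<le> f"
  using assms by (auto simp: min_def field_simps)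

lemma lambda_dc_step_amortized_fst:
  assumes lam: "0 < lam" "lam \<le> 1" and ordered: "fst c \<le> snd c" and req: "r = fst d"
    and step: "lambda_dc_step lam c r p = (c', k)"
  shows "fst c' \<le> snd c' \<and> lam * k + dc_potential lam c' d \<le> dc_potential lam c d"
proof -
  obtain a b where c: "c = (a, b)" by (cases c)
  obtain y where d: "d = (r, y)" using req by (cases d) auto
  consider "r \<le> a" | "a < r" "b \<le> r" | "a < r" "r < b" "p = 1" | "a < r" "r < b" "p \<noteq> 1"
    by linarith
  then show ?thesis
  proof cases
    case 1
    then have "c' = (r, b)" "k = a - r"
      using step by (auto simp: c lambda_dc_step_def)
    then show ?thesis
      using dc_potential_move_left_onto[of lam r a b y] 1 ordered lam by (simp add: c d)
  next
    case 2
    then have "c' = (a, r)" "k = r - b"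
      using step by (auto simp: c lambda_dc_step_def)
    then show ?thesis
      using dc_potential_move_right_onto[of lam a b r y] 2 ordered lam by (simp add: c d)
  next
    case 3
    define t where "t = min (r - a) ((b - r) / lam)"
    have "c' = (a + t, b - lam * t)" "k = t + lam * t"
      using step 3 by (auto simp: c lambda_dc_step_def t_def Let_def)
    moreover have "0 \<le> t" "a + t \<le> r" "r \<le> b - lam * t"
      using min_div_bounds[of lam "r - a" "b - r"] 3 lam by (auto simp: t_def)
    ultimately show ?thesis
      using dc_potential_move_inwards[of lam "lam * t" t a r b y] lam by (simp add: c d)
  next
    case 4
    define t where "t = min (b - r) ((r - a) / lam)"
    have "c' = (a + lam * t, b - t)" "k = lam * t + t"
      using step 4 by (auto simp: c lambda_dc_step_def t_def Let_def min.commute)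
    moreover have "0 \<le> t" "a + lam * t \<le> r" "r \<le> b - t"
      using min_div_bounds[of lam "b - r" "r - a"] 4 lam by (auto simp: t_def)
    ultimately show ?thesis
      using dc_potential_move_inwards[of lam t "lam * t" a r b y] lam by (simp add: c d)
  qed
qed

lemma lambda_dc_step_amortized:
  assumes "0 < lam" "lam \<le> 1" "fst c \<le> snd c" "r = fst d \<or> r = snd d"
    and "lambda_dc_step lam c r p = (c', k)"
  shows "fst c' \<le> snd c' \<and> lam * k + dc_potential lam c' d \<le> dc_potential lam c d"
proof (cases "r = fst d")
  case True
  then show ?thesis using lambda_dc_step_amortized_fst assms by blast
next
  case False
  then have "r = fst (snd d, fst d)" using assms(4) by simp
  from lambda_dc_step_amortized_fst[OF assms(1-3) this assms(5)] show ?thesis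
    by (simp add: dc_potential_swap)
qed

lemma lambda_dc_cost_amortized:
  assumes lam: "0 < lam" "lam \<le> 1"
  shows "fst c \<le> snd c \<Longrightarrow> list_all2 (\<lambda>r d. r = fst d \<or> r = snd d) rs xs \<Longrightarrow>
    lam * lambda_dc_cost lam c rs ps \<le> (1 + lam) * move_cost d xs + dc_potential lam c d"
proof (induction rs arbitrary: c ps d xs)
  case Nil
  then show ?case
    using lam move_cost_nonneg[of d xs] dc_potential_nonneg[of lam c d] by simp
next
  case (Cons r rs)
  show ?case
  proof (cases ps)
    case Nil
    then show ?thesis
      using lam Cons.prems move_cost_nonneg[of d xs] dc_potential_nonneg[of lam c d] by simp
  next
    case (Cons p ps')
    obtain e xs' where xs: "xs = e # xs'" and req: "r = fst e \<or> r = snd e"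
      and feasible: "list_all2 (\<lambda>r d. r = fst d \<or> r = snd d) rs xs'"
      using Cons.prems(2) by (auto simp: list_all2_Cons1)
    obtain c' k where step: "lambda_dc_step lam c r p = (c', k)"
      by (cases "lambda_dc_step lam c r p")
    have "fst c' \<le> snd c'" and amortized: "lam * k + dc_potential lam c' e \<le> dc_potential lam c e"
      using lambda_dc_step_amortized[OF lam Cons.prems(1) req step] by auto
    have "lam * lambda_dc_cost lam c (r # rs) ps = lam * k + lam * lambda_dc_cost lam c' rs ps'"
      using Cons step by (simp add: algebra_simps)
    also have "\<dots> \<le> lam * k + (1 + lam) * move_cost e xs' + dc_potential lam c' e"
      using Cons.IH[OF \<open>fst c' \<le> snd c'\<close> feasible] by simp
    also have "\<dots> \<le> (1 + lam) * move_cost e xs' + dc_potential lam c e"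
      using amortized by simp
    also have "\<dots> \<le> (1 + lam) * move_cost d xs + dc_potential lam c d"
      using dc_potential_triangle[of lam c e d] lam by (simp add: xs algebra_simps)
    finally show ?thesis .
  qed
qed

theorem lemma6:
  fixes lam :: real and s1 s2 :: real
  assumes "0 < lam" and "lam \<le> 1" and "s1 \<le> s2"
  shows "\<exists>c \<ge> 0. \<forall>(rs :: real list) (ps :: nat list).
           length ps = length rs \<longrightarrow> set ps \<subseteq> {1, 2} \<longrightarrow>
           lambda_dc_cost lam (s1, s2) rs ps \<le> (1 + 1 / lam) * opt_cost (s1, s2) rs + c"
proof (intro exI[of _ "(s2 - s1) / lam"] conjI allI impI)
  show "0 \<le> (s2 - s1) / lam" using assms by simp
  fix rs :: "real list" and ps :: "nat list"
  let ?alg = "lambda_dc_cost lam (s1, s2) rs ps"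
  have "(lam * ?alg - (s2 - s1)) / (1 + lam) \<le> opt_cost (s1, s2) rs"
  proof (rule opt_cost_greatest)
    fix xs assume "feasible_schedule rs xs"
    then have "lam * ?alg \<le> (1 + lam) * move_cost (s1, s2) xs + (s2 - s1)"
      using lambda_dc_cost_amortized[OF assms(1,2), of "(s1, s2)" rs xs ps "(s1, s2)"] assms(3)
      by (simp add: feasible_schedule_iff_list_all2 dc_potential_self)
    then show "(lam * ?alg - (s2 - s1)) / (1 + lam) \<le> move_cost (s1, s2) xs"
      using assms(1) by (simp add: divide_le_eq algebra_simps)
  qed
  then have "lam * ?alg \<le> (1 + lam) * opt_cost (s1, s2) rs + (s2 - s1)"
    using assms(1) by (simp add: divide_le_eq algebra_simps)
  moreover have "(1 + 1 / lam) * opt_cost (s1, s2) rs + (s2 - s1) / lam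
      = ((1 + lam) * opt_cost (s1, s2) rs + (s2 - s1)) / lam"
    using assms(1) by (simp add: field_simps)
  ultimately show "?alg \<le> (1 + 1 / lam) * opt_cost (s1, s2) rs + (s2 - s1) / lam"
    using assms(1) by (simp add: le_divide_eq mult.commute)
qed

end
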